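(* Let $\Sigma\supseteq\Sigma_m$ be a signature and $E\supseteq\mathrm{Md}$ a set of $\Sigma$-equations such that $(\Sigma,E)$ has the propagation property for pseudo units and the propagation property for pseudo zeros. Then $E$ is a complete axiomatisation of the equational theory of $\mathrm{Mod}_\Sigma(E\cup\mathrm{IL})$: for all $\Sigma$-terms $r,s$, $E\vdash r=s$ (in equational logic) if and only if $r=s$ holds in every $\Sigma$-structure satisfying all equations of $E$ and the inverse law $\mathrm{IL}$.
   Context: $\Sigma_m=(0,1,+,\cdot,-,{}^{-1})$; $\mathrm{Md}$ is the set of equations $(x+y)+z=x+(y+z)$, $x+y=y+x$, $x+0=x$, $x+(-x)=0$, $(x\cdot y)\cdot z=x\cdot(y\cdot z)$, $x\cdot y=y\cdot x$, $1\cdot x=x$, $x\cdot(y+z)=x\cdot y+x\cdot z$, $(x^{-1})^{-1}=x$, $x\cdot(x\cdot x^{-1})=x$. $1_t$ abbreviates $t\cdot t^{-1}$, $0_t$ abbreviates $1+(-1_t)$. The inverse law $\mathrm{IL}$ is the conditional axiom $x\neq 0\rightarrow x\cdot x^{-1}=1$ (universally quantified). $\mathrm{Mod}_\Sigma(E\cup\mathrm{IL})$ is the class of $\Sigma$-structures satisfying $E$ and $\mathrm{IL}$. $(\Sigma,E)$ has the propagation property for pseudo units if for all $\Sigma$-terms $t,r$ and every context $C[\,]$, $E\vdash 1_t\cdot C[r]=1_t\cdot C[1_t\cdot r]$; it has the propagation property for pseudo zeros if for all $\Sigma$-terms $t,r$ and every context $C[\,]$, $E\vdash 0_t\cdot C[r]=0_t\cdot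 C[0_t\cdot r]$. *)

theory Defs
  imports Main
begin

text \<open>Function symbols of a signature Sigma containing Sigma_m = (0,1,+,*,-,inverse):
  the six meadow symbols plus arbitrary extra symbols of type 'f, whose arities are
  given by a function ar.\<close>
datatype 'f sym = SZero | SOne | SAdd | SMul | SNeg | SInv | Ext 'f

fun arity :: "('f \<Rightarrow> nat) \<Rightarrow> 'f sym \<Rightarrow> nat" where
  "arity ar SZero = 0"
| "arity ar SOne = 0"
| "arity ar SAdd = 2"
| "arity ar SMul = 2"
| "arity ar SNeg = 1"
| "arity ar SInv = 1"
| "arity ar (Ext f) = ar f"

datatype 'g trm = Var nat | App 'g "'g trm list"

fun wf :: "('f \<Rightarrow> nat) \<Rightarrow> 'f sym trm \<Rightarrow> bool" where
  "wf ar (Var x) = True"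
| "wf ar (App g ts) = (length ts = arity ar g \<and> (\<forall>t\<in>set ts. wf ar t))"

definition wf_eq :: "('f \<Rightarrow> nat) \<Rightarrow> 'f sym trm \<times> 'f sym trm \<Rightarrow> bool" where
  "wf_eq ar e = (wf ar (fst e) \<and> wf ar (snd e))"

fun subst :: "(nat \<Rightarrow> 'g trm) \<Rightarrow> 'g trm \<Rightarrow> 'g trm" where
  "subst \<sigma> (Var x) = \<sigma> x"
| "subst \<sigma> (App g ts) = App g (map (subst \<sigma>) ts)"

datatype 'g ctxt = Hole | CApp 'g "'g trm list" "'g ctxt" "'g trm list"

fun fill :: "'g ctxt \<Rightarrow> 'g trm \<Rightarrow> 'g trm" where
  "fill Hole t = t"
| "fill (CApp g l C r) t = App g (l @ [fill C t] @ r)"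

fun wf_ctxt :: "('f \<Rightarrow> nat) \<Rightarrow> 'f sym ctxt \<Rightarrow> bool" where
  "wf_ctxt ar Hole = True"
| "wf_ctxt ar (CApp g l C r) =
     (length l + 1 + length r = arity ar g \<and> (\<forall>t\<in>set l. wf ar t) \<and>
      (\<forall>t\<in>set r. wf ar t) \<and> wf_ctxt ar C)"

abbreviation tzero :: "'f sym trm" where "tzero \<equiv> App SZero []"
abbreviation tone :: "'f sym trm" where "tone \<equiv> App SOne []"
abbreviation tadd :: "'f sym trm \<Rightarrow> 'f sym trm \<Rightarrow> 'f sym trm" where "tadd a b \<equiv> App SAdd [a, b]"
abbreviation tmul :: "'f sym trm \<Rightarrow> 'f sym trm \<Rightarrow> 'f sym trm" where "tmul a b \<equiv> App SMul [a, b]"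
abbreviation tneg :: "'f sym trm \<Rightarrow> 'f sym trm" where "tneg a \<equiv> App SNeg [a]"
abbreviation tinv :: "'f sym trm \<Rightarrow> 'f sym trm" where "tinv a \<equiv> App SInv [a]"

definition one_t :: "'f sym trm \<Rightarrow> 'f sym trm" where "one_t t = tmul t (tinv t)"
definition zero_t :: "'f sym trm \<Rightarrow> 'f sym trm" where "zero_t t = tadd tone (tneg (one_t t))"

definition Md :: "('f sym trm \<times> 'f sym trm) set" where
  "Md = (let x = Var 0; y = Var 1; z = Var 2 in
    { (tadd (tadd x y) z, tadd x (tadd y z)),
      (tadd x y, tadd y x),
      (tadd x tzero, x),
      (tadd x (tneg x), tzero),
      (tmul (tmul x y) z, tmul x (tmul y z)),
      (tmul x y, tmul y x),
      (tmul tone x, x),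
      (tmul x (tadd y z), tadd (tmul x y) (tmul x z)),
      (tinv (tinv x), x),
      (tmul x (tmul x (tinv x)), x) })"

inductive eqderiv :: "('f \<Rightarrow> nat) \<Rightarrow> ('f sym trm \<times> 'f sym trm) set \<Rightarrow> 'f sym trm \<Rightarrow> 'f sym trm \<Rightarrow> bool"
  for ar E where
  ax: "(l, r) \<in> E \<Longrightarrow> (\<forall>x. wf ar (\<sigma> x)) \<Longrightarrow> eqderiv ar E (subst \<sigma> l) (subst \<sigma> r)"
| refl: "wf ar t \<Longrightarrow> eqderiv ar E t t"
| sym: "eqderiv ar E t u \<Longrightarrow> eqderiv ar E u t"
| trans: "eqderiv ar E t u \<Longrightarrow> eqderiv ar E u w \<Longrightarrow> eqderiv ar E t w"
| cong: "eqderiv ar E t u \<Longrightarrow> wf_ctxt ar C \<Longrightarrow> eqderiv ar E (fill C t) (fill C u)"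

definition prop_units :: "('f \<Rightarrow> nat) \<Rightarrow> ('f sym trm \<times> 'f sym trm) set \<Rightarrow> bool" where
  "prop_units ar E = (\<forall>t r C. wf ar t \<longrightarrow> wf ar r \<longrightarrow> wf_ctxt ar C \<longrightarrow>
     eqderiv ar E (tmul (one_t t) (fill C r)) (tmul (one_t t) (fill C (tmul (one_t t) r))))"

definition prop_zeros :: "('f \<Rightarrow> nat) \<Rightarrow> ('f sym trm \<times> 'f sym trm) set \<Rightarrow> bool" where
  "prop_zeros ar E = (\<forall>t r C. wf ar t \<longrightarrow> wf ar r \<longrightarrow> wf_ctxt ar C \<longrightarrow>
     eqderiv ar E (tmul (zero_t t) (fill C r)) (tmul (zero_t t) (fill C (tmul (zero_t t) r))))"

fun eval :: "('g \<Rightarrow> 'a list \<Rightarrow> 'a) \<Rightarrow> (nat \<Rightarrow> 'a) \<Rightarrow> 'g trm \<Rightarrow> 'a" where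
  "eval I v (Var x) = v x"
| "eval I v (App g ts) = I g (map (eval I v) ts)"

definition is_struct :: "('f \<Rightarrow> nat) \<Rightarrow> 'a set \<Rightarrow> ('f sym \<Rightarrow> 'a list \<Rightarrow> 'a) \<Rightarrow> bool" where
  "is_struct ar A I = (A \<noteq> {} \<and>
     (\<forall>g xs. length xs = arity ar g \<longrightarrow> set xs \<subseteq> A \<longrightarrow> I g xs \<in> A))"

definition sat_eq :: "'a set \<Rightarrow> ('f sym \<Rightarrow> 'a list \<Rightarrow> 'a) \<Rightarrow> 'f sym trm \<times> 'f sym trm \<Rightarrow> bool" where
  "sat_eq A I e = (\<forall>v. (\<forall>x. v x \<in> A) \<longrightarrow> eval I v (fst e) = eval I v (snd e))"

definition sat_IL :: "'a set \<Rightarrow> ('f sym \<Rightarrow> 'a list \<Rightarrow> 'a) \<Rightarrow> bool" where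
  "sat_IL A I = (\<forall>x\<in>A. x \<noteq> I SZero [] \<longrightarrow> I SMul [x, I SInv [x]] = I SOne [])"

definition model_E_IL :: "('f \<Rightarrow> nat) \<Rightarrow> ('f sym trm \<times> 'f sym trm) set \<Rightarrow> 'a set \<Rightarrow> ('f sym \<Rightarrow> 'a list \<Rightarrow> 'a) \<Rightarrow> bool" where
  "model_E_IL ar E A I = (is_struct ar A I \<and> (\<forall>e\<in>E. sat_eq A I e) \<and> sat_IL A I)"

end

theory Submission
  imports Defs
begin

text \<open>
  For completeness, suppose r = s is
  not derivable. By Zorn's lemma there is a maximal E-congruence M (a congruence on
  well-formed terms containing derivability) that does not identify r and s. The key
  lemma: if t is not identified with 0 by M, then 1_t is identified with 1. Otherwise,
  pulling M back along multiplication by 1_t, resp. by 0_t, gives two strictly larger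
  E-congruences (this is where propagation is used), both identifying r and s; since
  r = 1_t r + 0_t r, M would identify r and s. Hence the quotient of the term algebra by
  M satisfies IL and E but refutes r = s. Finally, the quotient (whose elements are sets
  of terms) is copied along the given injection into the type of the target structures.
\<close>

lemma wf_subst: "wf ar t \<Longrightarrow> \<forall>x. wf ar (\<sigma> x) \<Longrightarrow> wf ar (subst \<sigma> t)"
  by (induction t) auto

lemma wf_fill: "wf_ctxt ar C \<Longrightarrow> wf ar t \<Longrightarrow> wf ar (fill C t)"
  by (induction C) auto

lemma subst_Var: "subst Var t = t"
  by (induction t) (auto intro: map_idI)

lemma eval_subst: "eval I v (subst \<sigma> t) = eval I (\<lambda>x. eval I v (\<sigma> x)) t"
  by (induction t) (auto cong: map_cong)

lemma eval_fill: "eval I v t = eval I v u \<Longrightarrow> eval I v (fill C t) = eval I v (fill C u)"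
  by (induction C) auto

lemma eval_in_carrier:
  assumes "is_struct ar A I" and "\<forall>x. v x \<in> A"
  shows "wf ar t \<Longrightarrow> eval I v t \<in> A"
proof (induction t)
  case (App g ts)
  then have "length (map (eval I v) ts) = arity ar g" "set (map (eval I v) ts) \<subseteq> A" by auto
  with assms(1) show ?case by (simp add: is_struct_def)
qed (use assms(2) in auto)

lemma eqderiv_wf:
  assumes "\<forall>e\<in>E. wf_eq ar e"
  shows "eqderiv ar E a b \<Longrightarrow> wf ar a \<and> wf ar b"
proof (induction rule: eqderiv.induct)
  case (ax l r \<sigma>)
  then show ?case using assms by (auto simp: wf_eq_def intro!: wf_subst)
qed (auto intro: wf_fill)

theorem soundness:
  assumes "eqderiv ar E a b" and model: "model_E_IL ar E A I"
  shows "sat_eq A I (a, b)"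
  using assms(1)
proof (induction rule: eqderiv.induct)
  case (ax l r \<sigma>)
  show ?case unfolding sat_eq_def
  proof (intro allI impI)
    fix v :: "nat \<Rightarrow> _" assume v: "\<forall>x. v x \<in> A"
    have "\<forall>x. eval I v (\<sigma> x) \<in> A"
      using ax(2) v model by (auto simp: model_E_IL_def intro: eval_in_carrier)
    then have "eval I (\<lambda>x. eval I v (\<sigma> x)) l = eval I (\<lambda>x. eval I v (\<sigma> x)) r"
      using ax(1) model by (auto simp: model_E_IL_def sat_eq_def)
    then show "eval I v (fst (subst \<sigma> l, subst \<sigma> r)) = eval I v (snd (subst \<sigma> l, subst \<sigma> r))"
      by (simp add: eval_subst)
  qed
qed (auto simp: sat_eq_def intro: eval_fill)

text \<open>Copying a structure along a map h that is injective on the carrier. This lets us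
  move the term model, whose elements are sets of terms, into an arbitrary type.\<close>
definition transport :: "('b \<Rightarrow> 'a) \<Rightarrow> 'b set \<Rightarrow> ('g \<Rightarrow> 'b list \<Rightarrow> 'b) \<Rightarrow> 'g \<Rightarrow> 'a list \<Rightarrow> 'a" where
  "transport h A I g xs = h (I g (map (inv_into A h) xs))"

lemma eval_transport:
  assumes struct: "is_struct ar A I" and inj: "inj_on h A" and v: "\<forall>x. v x \<in> A"
  shows "wf ar t \<Longrightarrow> eval (transport h A I) (\<lambda>x. h (v x)) t = h (eval I v t)"
proof (induction t)
  case (App g ts)
  have "inv_into A h (eval (transport h A I) (\<lambda>x. h (v x)) ti) = eval I v ti" if "ti \<in> set ts" for ti
    using App that inj eval_in_carrier[OF struct v] by auto
  then show ?case by (simp add: transport_def[of h A I g] comp_def cong: map_cong)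
qed simp

lemma transport_model:
  assumes model: "model_E_IL ar E A I" and inj: "inj_on h A" and wfE: "\<forall>e\<in>E. wf_eq ar e"
  shows "model_E_IL ar E (h ` A) (transport h A I)"
proof -
  have struct: "is_struct ar A I" and satE: "\<forall>e\<in>E. sat_eq A I e" and IL: "sat_IL A I"
    using model by (auto simp: model_E_IL_def)
  have "is_struct ar (h ` A) (transport h A I)"
    unfolding is_struct_def
  proof (intro conjI allI impI)
    show "h ` A \<noteq> {}" using struct by (simp add: is_struct_def)
    fix g xs assume len: "length xs = arity ar g" and xs: "set xs \<subseteq> h ` A"
    have "set (map (inv_into A h) xs) \<subseteq> A" using xs by (auto intro: inv_into_into)
    then have "I g (map (inv_into A h) xs) \<in> A" using struct len by (simp add: is_struct_def)
    then show "transport h A I g xs \<in> h ` A" by (simp add: transport_def)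
  qed
  moreover have "sat_eq (h ` A) (transport h A I) e" if e: "e \<in> E" for e
    unfolding sat_eq_def
  proof (intro allI impI)
    fix v' :: "nat \<Rightarrow> _" assume v': "\<forall>x. v' x \<in> h ` A"
    define v where "v = inv_into A h \<circ> v'"
    have v: "\<forall>x. v x \<in> A" and hv: "(\<lambda>x. h (v x)) = v'"
      using v' by (auto simp: v_def inv_into_into f_inv_into_f)
    have "wf ar (fst e)" "wf ar (snd e)" using wfE e by (auto simp: wf_eq_def)
    moreover have "eval I v (fst e) = eval I v (snd e)" using satE e v by (simp add: sat_eq_def)
    ultimately show "eval (transport h A I) v' (fst e) = eval (transport h A I) v' (snd e)"
      using eval_transport[OF struct inj v] hv by auto
  qed
  moreover have "sat_IL (h ` A) (transport h A I)"
    unfolding sat_IL_def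
  proof (intro ballI impI)
    fix y assume "y \<in> h ` A" and y0: "y \<noteq> transport h A I SZero []"
    then obtain x where x: "x \<in> A" "y = h x" by blast
    have "x \<noteq> I SZero []" using y0 x by (auto simp: transport_def)
    then have "I SMul [x, I SInv [x]] = I SOne []" using IL x by (simp add: sat_IL_def)
    moreover have "I SInv [x] \<in> A" using struct x by (simp add: is_struct_def)
    ultimately show "transport h A I SMul [y, transport h A I SInv [y]] = transport h A I SOne []"
      using x inj by (simp add: transport_def)
  qed
  ultimately show ?thesis using satE by (simp add: model_E_IL_def)
qed

lemma transport_refutes:
  assumes struct: "is_struct ar A I" and inj: "inj_on h A" and "wf ar r" "wf ar s"
    and refuted: "\<not> sat_eq A I (r, s)"
  shows "\<not> sat_eq (h ` A) (transport h A I) (r, s)"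
proof -
  obtain v where v: "\<forall>x. v x \<in> A" and "eval I v r \<noteq> eval I v s"
    using refuted by (auto simp: sat_eq_def)
  then have "h (eval I v r) \<noteq> h (eval I v s)"
    using inj eval_in_carrier[OF struct v] assms(3,4) by (auto dest: inj_onD)
  moreover have "\<forall>x. (\<lambda>x. h (v x)) x \<in> h ` A" using v by simp
  ultimately show ?thesis
    using eval_transport[OF struct inj v] assms(3,4) unfolding sat_eq_def by (metis fst_conv snd_conv)
qed

definition inst3 :: "'g trm \<Rightarrow> 'g trm \<Rightarrow> 'g trm \<Rightarrow> nat \<Rightarrow> 'g trm" where
  "inst3 a b c = (\<lambda>n. if n = 0 then a else if n = 1 then b else c)"

locale meadow_theory =
  fixes ar :: "'f \<Rightarrow> nat" and E :: "('f sym trm \<times> 'f sym trm) set"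
  assumes wf_E: "\<forall>e\<in>E. wf_eq ar e" and Md_E: "Md \<subseteq> E"
begin

abbreviation derivable :: "'f sym trm \<Rightarrow> 'f sym trm \<Rightarrow> bool" (infix "\<approx>" 50) where
  "a \<approx> b \<equiv> eqderiv ar E a b"

lemma derivable_wf: "a \<approx> b \<Longrightarrow> wf ar a \<and> wf ar b"
  using eqderiv_wf[OF wf_E] .

declare eqderiv.trans [trans]

lemma wf_meadow_simps [simp]:
  "wf ar tzero" "wf ar tone" "wf ar (tadd a b) = (wf ar a \<and> wf ar b)"
  "wf ar (tmul a b) = (wf ar a \<and> wf ar b)" "wf ar (tneg a) = wf ar a" "wf ar (tinv a) = wf ar a"
  "wf ar (one_t a) = wf ar a" "wf ar (zero_t a) = wf ar a"
  by (auto simp: one_t_def zero_t_def)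

lemma Md_instance:
  assumes "(l, r) \<in> Md" "wf ar a" "wf ar b" "wf ar c"
  shows "subst (inst3 a b c) l \<approx> subst (inst3 a b c) r"
  using assms Md_E by (intro eqderiv.ax) (auto simp: inst3_def)

lemma add_assoc: "wf ar a \<Longrightarrow> wf ar b \<Longrightarrow> wf ar c \<Longrightarrow> tadd (tadd a b) c \<approx> tadd a (tadd b c)"
  using Md_instance[of "tadd (tadd (Var 0) (Var 1)) (Var 2)" "tadd (Var 0) (tadd (Var 1) (Var 2))" a b c]
  by (simp add: Md_def Let_def inst3_def)
lemma add_comm: "wf ar a \<Longrightarrow> wf ar b \<Longrightarrow> tadd a b \<approx> tadd b a"
  using Md_instance[of "tadd (Var 0) (Var 1)" "tadd (Var 1) (Var 0)" a b a] by (simp add: Md_def Let_def inst3_def)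
lemma add_zero: "wf ar a \<Longrightarrow> tadd a tzero \<approx> a"
  using Md_instance[of "tadd (Var 0) tzero" "Var 0" a a a] by (simp add: Md_def Let_def inst3_def)
lemma add_neg: "wf ar a \<Longrightarrow> tadd a (tneg a) \<approx> tzero"
  using Md_instance[of "tadd (Var 0) (tneg (Var 0))" tzero a a a] by (simp add: Md_def Let_def inst3_def)
lemma mul_assoc: "wf ar a \<Longrightarrow> wf ar b \<Longrightarrow> wf ar c \<Longrightarrow> tmul (tmul a b) c \<approx> tmul a (tmul b c)"
  using Md_instance[of "tmul (tmul (Var 0) (Var 1)) (Var 2)" "tmul (Var 0) (tmul (Var 1) (Var 2))" a b c]
  by (simp add: Md_def Let_def inst3_def)
lemma mul_comm: "wf ar a \<Longrightarrow> wf ar b \<Longrightarrow> tmul a b \<approx> tmul b a"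
  using Md_instance[of "tmul (Var 0) (Var 1)" "tmul (Var 1) (Var 0)" a b a] by (simp add: Md_def Let_def inst3_def)
lemma one_mul: "wf ar a \<Longrightarrow> tmul tone a \<approx> a"
  using Md_instance[of "tmul tone (Var 0)" "Var 0" a a a] by (simp add: Md_def Let_def inst3_def)
lemma distrib: "wf ar a \<Longrightarrow> wf ar b \<Longrightarrow> wf ar c \<Longrightarrow> tmul a (tadd b c) \<approx> tadd (tmul a b) (tmul a c)"
  using Md_instance[of "tmul (Var 0) (tadd (Var 1) (Var 2))" "tadd (tmul (Var 0) (Var 1)) (tmul (Var 0) (Var 2))" a b c]
  by (simp add: Md_def Let_def inst3_def)
lemma restricted_inverse: "wf ar a \<Longrightarrow> tmul a (tmul a (tinv a)) \<approx> a"
  using Md_instance[of "tmul (Var 0) (tmul (Var 0) (tinv (Var 0)))" "Var 0" a a a]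
  by (simp add: Md_def Let_def inst3_def)

lemma binary_cong:
  assumes "a \<approx> a'" "b \<approx> b'" "arity ar g = 2"
  shows "App g [a, b] \<approx> App g [a', b']"
proof -
  have wf: "wf ar a'" "wf ar b" using assms derivable_wf by auto
  have "fill (CApp g [] Hole [b]) a \<approx> fill (CApp g [] Hole [b]) a'"
    using assms wf by (intro eqderiv.cong) auto
  also have "fill (CApp g [] Hole [b]) a' = fill (CApp g [a'] Hole []) b" by simp
  also have "fill (CApp g [a'] Hole []) b \<approx> fill (CApp g [a'] Hole []) b'"
    using assms wf by (intro eqderiv.cong) auto
  finally show ?thesis by simp
qed

lemma add_cong: "a \<approx> a' \<Longrightarrow> b \<approx> b' \<Longrightarrow> tadd a b \<approx> tadd a' b'"
  using binary_cong by simp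
lemma mul_cong: "a \<approx> a' \<Longrightarrow> b \<approx> b' \<Longrightarrow> tmul a b \<approx> tmul a' b'"
  using binary_cong by simp
lemma neg_cong: "a \<approx> a' \<Longrightarrow> tneg a \<approx> tneg a'"
  using eqderiv.cong[of ar E a a' "CApp SNeg [] Hole []"] by simp

lemma mul_one: "wf ar a \<Longrightarrow> tmul a tone \<approx> a"
  by (rule eqderiv.trans[OF mul_comm one_mul]) simp_all

lemma mul_zero:
  assumes "wf ar a"
  shows "tmul a tzero \<approx> tzero"
proof -
  let ?p = "tmul a tzero"
  have wf: "wf ar ?p" using assms by simp
  have "?p \<approx> tadd ?p tzero" using wf by (intro eqderiv.sym[OF add_zero])
  also have "\<dots> \<approx> tadd ?p (tadd ?p (tneg ?p))"
    using wf by (intro add_cong eqderiv.refl eqderiv.sym[OF add_neg])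
  also have "\<dots> \<approx> tadd (tadd ?p ?p) (tneg ?p)"
    using wf by (intro eqderiv.sym[OF add_assoc]) auto
  also have "\<dots> \<approx> tadd (tmul a (tadd tzero tzero)) (tneg ?p)"
    using wf by (intro add_cong eqderiv.refl eqderiv.sym[OF distrib]) auto
  also have "\<dots> \<approx> tadd ?p (tneg ?p)"
    using wf by (intro add_cong mul_cong eqderiv.refl add_zero) auto
  also have "\<dots> \<approx> tzero" using wf by (intro add_neg)
  finally show ?thesis .
qed

lemma mul_neg:
  assumes "wf ar a" "wf ar b"
  shows "tmul a (tneg b) \<approx> tneg (tmul a b)"
proof -
  let ?p = "tmul a b" and ?q = "tmul a (tneg b)"
  have wf: "wf ar ?p" "wf ar ?q" using assms by auto
  have "?q \<approx> tadd ?q tzero" using wf by (intro eqderiv.sym[OF add_zero])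
  also have "\<dots> \<approx> tadd ?q (tadd ?p (tneg ?p))"
    using wf by (intro add_cong eqderiv.refl eqderiv.sym[OF add_neg])
  also have "\<dots> \<approx> tadd (tadd ?q ?p) (tneg ?p)"
    using wf by (intro eqderiv.sym[OF add_assoc]) auto
  also have "\<dots> \<approx> tadd (tadd ?p ?q) (tneg ?p)"
    using wf by (intro add_cong eqderiv.refl add_comm) auto
  also have "\<dots> \<approx> tadd (tmul a (tadd b (tneg b))) (tneg ?p)"
    using wf assms by (intro add_cong eqderiv.refl eqderiv.sym[OF distrib]) auto
  also have "\<dots> \<approx> tadd (tmul a tzero) (tneg ?p)"
    using wf assms by (intro add_cong mul_cong eqderiv.refl add_neg) auto
  also have "\<dots> \<approx> tadd tzero (tneg ?p)"
    using wf assms by (intro add_cong eqderiv.refl mul_zero) auto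
  also have "\<dots> \<approx> tadd (tneg ?p) tzero" using wf by (intro add_comm) auto
  also have "\<dots> \<approx> tneg ?p" using wf by (intro add_zero) auto
  finally show ?thesis .
qed

lemma one_t_idempotent:
  assumes "wf ar t"
  shows "tmul (one_t t) (one_t t) \<approx> tmul (one_t t) tone"
proof -
  let ?u = "tmul t (tinv t)"
  have wf: "wf ar ?u" "wf ar (tinv t)" using assms by auto
  have "tmul ?u ?u \<approx> tmul t (tmul (tinv t) ?u)" using wf assms by (intro mul_assoc) auto
  also have "\<dots> \<approx> tmul t (tmul ?u (tinv t))"
    using wf assms by (intro mul_cong eqderiv.refl mul_comm) auto
  also have "\<dots> \<approx> tmul (tmul t ?u) (tinv t)"
    using wf assms by (intro eqderiv.sym[OF mul_assoc]) auto
  also have "\<dots> \<approx> ?u" using wf assms by (intro mul_cong eqderiv.refl restricted_inverse) auto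
  also have "\<dots> \<approx> tmul ?u tone" using wf by (intro eqderiv.sym[OF mul_one])
  finally show ?thesis unfolding one_t_def .
qed

lemma zero_t_annihilates:
  assumes "wf ar t"
  shows "tmul (zero_t t) t \<approx> tmul (zero_t t) tzero"
proof -
  let ?u = "tmul t (tinv t)"
  let ?z = "tadd tone (tneg ?u)"
  have wf: "wf ar ?u" "wf ar ?z" using assms by auto
  have "tmul ?z t \<approx> tmul t ?z" using wf assms by (intro mul_comm) auto
  also have "\<dots> \<approx> tadd (tmul t tone) (tmul t (tneg ?u))"
    using wf assms by (intro distrib) auto
  also have "\<dots> \<approx> tadd t (tneg (tmul t ?u))"
    using wf assms by (intro add_cong mul_one mul_neg) auto
  also have "\<dots> \<approx> tadd t (tneg t)"
    using wf assms by (intro add_cong eqderiv.refl neg_cong restricted_inverse) auto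
  also have "\<dots> \<approx> tzero" using assms by (intro add_neg)
  also have "\<dots> \<approx> tmul ?z tzero" using wf by (intro eqderiv.sym[OF mul_zero])
  finally show ?thesis unfolding one_t_def zero_t_def .
qed

lemma unit_zero_split:
  assumes "wf ar t" "wf ar r"
  shows "tadd (tmul (one_t t) r) (tmul (zero_t t) r) \<approx> r"
proof -
  let ?u = "tmul t (tinv t)"
  let ?z = "tadd tone (tneg ?u)"
  have wf: "wf ar ?u" "wf ar ?z" using assms by auto
  have sum_one: "tadd ?u ?z \<approx> tone"
  proof -
    have "tadd ?u ?z \<approx> tadd ?z ?u" using wf by (intro add_comm)
    also have "\<dots> \<approx> tadd tone (tadd (tneg ?u) ?u)" using wf by (intro add_assoc) auto
    also have "\<dots> \<approx> tadd tone (tadd ?u (tneg ?u))"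
      using wf by (intro add_cong eqderiv.refl add_comm) auto
    also have "\<dots> \<approx> tadd tone tzero" using wf by (intro add_cong eqderiv.refl add_neg) auto
    also have "\<dots> \<approx> tone" by (intro add_zero) simp
    finally show ?thesis .
  qed
  have "tadd (tmul ?u r) (tmul ?z r) \<approx> tadd (tmul r ?u) (tmul r ?z)"
    using wf assms by (intro add_cong mul_comm) auto
  also have "\<dots> \<approx> tmul r (tadd ?u ?z)" using wf assms by (intro eqderiv.sym[OF distrib]) auto
  also have "\<dots> \<approx> tmul r tone" using assms sum_one by (intro mul_cong eqderiv.refl)
  also have "\<dots> \<approx> r" using assms by (intro mul_one)
  finally show ?thesis unfolding one_t_def zero_t_def .
qed

definition E_congruence :: "('f sym trm \<times> 'f sym trm) set \<Rightarrow> bool" where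
  "E_congruence R \<longleftrightarrow> {(a, b). a \<approx> b} \<subseteq> R \<and> R \<subseteq> {(a, b). wf ar a \<and> wf ar b} \<and>
     sym R \<and> trans R \<and> (\<forall>a b C. (a, b) \<in> R \<longrightarrow> wf_ctxt ar C \<longrightarrow> (fill C a, fill C b) \<in> R)"

lemma
  assumes "E_congruence R"
  shows congruence_derivable: "a \<approx> b \<Longrightarrow> (a, b) \<in> R"
    and congruence_wf: "(a, b) \<in> R \<Longrightarrow> wf ar a \<and> wf ar b"
    and congruence_sym: "(a, b) \<in> R \<Longrightarrow> (b, a) \<in> R"
    and congruence_trans: "(a, b) \<in> R \<Longrightarrow> (b, c) \<in> R \<Longrightarrow> (a, c) \<in> R"
    and congruence_fill: "(a, b) \<in> R \<Longrightarrow> wf_ctxt ar C \<Longrightarrow> (fill C a, fill C b) \<in> R"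
    and congruence_refl: "wf ar a \<Longrightarrow> (a, a) \<in> R"
  using assms eqderiv.refl unfolding E_congruence_def sym_def trans_def by blast+

lemma derivability_congruence: "E_congruence {(a, b). a \<approx> b}"
  unfolding E_congruence_def sym_def trans_def
  by (auto intro: eqderiv.sym eqderiv.trans eqderiv.cong dest: derivable_wf)

lemma congruence_chain_Union:
  assumes "\<C> \<noteq> {}" and chain: "chain\<^sub>\<subseteq> \<C>" and cong: "\<forall>R\<in>\<C>. E_congruence R"
  shows "E_congruence (\<Union>\<C>)"
  unfolding E_congruence_def
proof (intro conjI)
  obtain R0 where "R0 \<in> \<C>" using assms(1) by blast
  then show "{(a, b). a \<approx> b} \<subseteq> \<Union>\<C>" using cong congruence_derivable by blast
  show "trans (\<Union>\<C>)"
    using chain cong by (intro chain_subset_trans_Union) (auto simp: E_congruence_def)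
  show "\<Union>\<C> \<subseteq> {(a, b). wf ar a \<and> wf ar b}" using cong congruence_wf by blast
  show "sym (\<Union>\<C>)" using cong congruence_sym unfolding sym_def by blast
  show "\<forall>a b C. (a, b) \<in> \<Union>\<C> \<longrightarrow> wf_ctxt ar C \<longrightarrow> (fill C a, fill C b) \<in> \<Union>\<C>"
    using cong congruence_fill by blast
qed

definition maximal_refuting :: "'f sym trm \<Rightarrow> 'f sym trm \<Rightarrow> ('f sym trm \<times> 'f sym trm) set \<Rightarrow> bool" where
  "maximal_refuting r s M \<longleftrightarrow> E_congruence M \<and> (r, s) \<notin> M \<and>
     (\<forall>X. E_congruence X \<longrightarrow> (r, s) \<notin> X \<longrightarrow> M \<subseteq> X \<longrightarrow> X = M)"

lemma maximal_refuting_exists: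
  assumes "\<not> r \<approx> s"
  shows "\<exists>M. maximal_refuting r s M"
proof -
  let ?G = "{R. E_congruence R \<and> (r, s) \<notin> R}"
  have "\<exists>M\<in>?G. \<forall>X\<in>?G. M \<subseteq> X \<longrightarrow> X = M"
  proof (rule subset_Zorn_nonempty)
    show "?G \<noteq> {}" using derivability_congruence assms by blast
    fix \<C> assume "\<C> \<noteq> {}" "subset.chain ?G \<C>"
    then show "\<Union>\<C> \<in> ?G"
      using congruence_chain_Union[of \<C>] by (auto simp: subset_chain_def chain_subset_def)
  qed
  then show ?thesis unfolding maximal_refuting_def by blast
qed

lemma maximal_refuting_extension:
  assumes "maximal_refuting r s M" "E_congruence X" "M \<subseteq> X" "(a, b) \<in> X" "(a, b) \<notin> M"
  shows "(r, s) \<in> X"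
  using assms unfolding maximal_refuting_def by blast

text \<open>If multiplication by p propagates into contexts (as the hypotheses guarantee for
  p = 1_t and p = 0_t), then pulling an E-congruence back along x \<mapsto> p x gives an
  E-congruence containing it.\<close>
definition propagates :: "'f sym trm \<Rightarrow> bool" where
  "propagates p \<longleftrightarrow> (\<forall>a C. wf ar a \<longrightarrow> wf_ctxt ar C \<longrightarrow> tmul p (fill C a) \<approx> tmul p (fill C (tmul p a)))"

definition multiplier_rel :: "'f sym trm \<Rightarrow> ('f sym trm \<times> 'f sym trm) set \<Rightarrow> ('f sym trm \<times> 'f sym trm) set" where
  "multiplier_rel p M = {(a, b). wf ar a \<and> wf ar b \<and> (tmul p a, tmul p b) \<in> M}"

lemma multiplier_rel_extends:
  assumes "E_congruence M" "wf ar p"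
  shows "M \<subseteq> multiplier_rel p M"
  using assms congruence_wf congruence_fill[OF assms(1), of _ _ "CApp SMul [p] Hole []"]
  by (auto simp: multiplier_rel_def)

lemma multiplier_rel_congruence:
  assumes M: "E_congruence M" and p: "wf ar p" "propagates p"
  shows "E_congruence (multiplier_rel p M)"
proof -
  have fill: "(tmul p (fill C a), tmul p (fill C b)) \<in> M"
    if ab: "wf ar a" "wf ar b" "(tmul p a, tmul p b) \<in> M" and C: "wf_ctxt ar C" for a b C
  proof -
    have "(tmul p (fill C a), tmul p (fill C (tmul p a))) \<in> M"
      using p ab C by (auto simp: propagates_def intro: congruence_derivable[OF M])
    moreover have "(tmul p (fill C (tmul p a)), tmul p (fill C (tmul p b))) \<in> M"
      using congruence_fill[OF M ab(3), of "CApp SMul [p] C []"] p C by simp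
    moreover have "(tmul p (fill C (tmul p b)), tmul p (fill C b)) \<in> M"
      using p ab C unfolding propagates_def by (auto intro: congruence_derivable[OF M] eqderiv.sym)
    ultimately show ?thesis using congruence_trans[OF M] by blast
  qed
  show ?thesis
    unfolding E_congruence_def multiplier_rel_def
  proof (intro conjI allI impI)
    show "{(a, b). a \<approx> b} \<subseteq> {(a, b). wf ar a \<and> wf ar b \<and> (tmul p a, tmul p b) \<in> M}"
    proof clarify
      fix a b assume "a \<approx> b"
      then have "tmul p a \<approx> tmul p b" using p by (intro mul_cong eqderiv.refl)
      then show "wf ar a \<and> wf ar b \<and> (tmul p a, tmul p b) \<in> M"
        using \<open>a \<approx> b\<close> derivable_wf congruence_derivable[OF M] by blast
    qed
    show "sym {(a, b). wf ar a \<and> wf ar b \<and> (tmul p a, tmul p b) \<in> M}"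
      using congruence_sym[OF M] unfolding sym_def by blast
    show "trans {(a, b). wf ar a \<and> wf ar b \<and> (tmul p a, tmul p b) \<in> M}"
      using congruence_trans[OF M] unfolding trans_def by blast
  qed (use fill wf_fill in auto)
qed

lemma prop_units_propagates: "prop_units ar E \<Longrightarrow> wf ar t \<Longrightarrow> propagates (one_t t)"
  unfolding prop_units_def propagates_def by blast

lemma prop_zeros_propagates: "prop_zeros ar E \<Longrightarrow> wf ar t \<Longrightarrow> propagates (zero_t t)"
  unfolding prop_zeros_def propagates_def by blast

text \<open>By the split r = 1_t r + 0_t r, an E-congruence identifying r and s after
  multiplication by both 1_t and 0_t identifies r and s.\<close>
lemma congruence_split:
  assumes M: "E_congruence M" and wf: "wf ar t" "wf ar r" "wf ar s"
    and one: "(tmul (one_t t) r, tmul (one_t t) s) \<in> M"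
    and zero: "(tmul (zero_t t) r, tmul (zero_t t) s) \<in> M"
  shows "(r, s) \<in> M"
proof -
  let ?a = "tmul (one_t t) r" and ?b = "tmul (zero_t t) r"
  let ?a' = "tmul (one_t t) s" and ?b' = "tmul (zero_t t) s"
  have "(r, tadd ?a ?b) \<in> M"
    using unit_zero_split[OF wf(1,2)] by (intro congruence_derivable[OF M] eqderiv.sym[of ar E _ r])
  moreover have "(tadd ?a ?b, tadd ?a' ?b) \<in> M"
    using congruence_fill[OF M one, of "CApp SAdd [] Hole [?b]"] wf by simp
  moreover have "(tadd ?a' ?b, tadd ?a' ?b') \<in> M"
    using congruence_fill[OF M zero, of "CApp SAdd [?a'] Hole []"] wf by simp
  moreover have "(tadd ?a' ?b', s) \<in> M"
    using unit_zero_split[OF wf(1,3)] by (intro congruence_derivable[OF M])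
  ultimately show ?thesis using congruence_trans[OF M] by blast
qed

lemma maximal_refuting_inverse_law:
  assumes max: "maximal_refuting r s M" and pu: "prop_units ar E" and pz: "prop_zeros ar E"
    and wf: "wf ar r" "wf ar s" "wf ar t" and nonzero: "(t, tzero) \<notin> M"
  shows "(one_t t, tone) \<in> M"
proof (rule ccontr)
  assume not_one: "(one_t t, tone) \<notin> M"
  have M: "E_congruence M" and rs: "(r, s) \<notin> M" using max by (auto simp: maximal_refuting_def)
  let ?R1 = "multiplier_rel (one_t t) M" and ?R0 = "multiplier_rel (zero_t t) M"
  have "(one_t t, tone) \<in> ?R1"
    using one_t_idempotent[OF wf(3)] congruence_derivable[OF M] wf by (auto simp: multiplier_rel_def)
  then have "(r, s) \<in> ?R1"
    using maximal_refuting_extension[OF max _ _ _ not_one] multiplier_rel_congruence[OF M]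
      multiplier_rel_extends[OF M] prop_units_propagates[OF pu] wf(3) by simp
  moreover have "(t, tzero) \<in> ?R0"
    using zero_t_annihilates[OF wf(3)] congruence_derivable[OF M] wf by (auto simp: multiplier_rel_def)
  then have "(r, s) \<in> ?R0"
    using maximal_refuting_extension[OF max _ _ _ nonzero] multiplier_rel_congruence[OF M]
      multiplier_rel_extends[OF M] prop_zeros_propagates[OF pz] wf(3) by simp
  ultimately have "(r, s) \<in> M"
    using congruence_split[OF M wf(3,1,2)] by (simp add: multiplier_rel_def)
  with rs show False ..
qed

definition quotient_carrier :: "('f sym trm \<times> 'f sym trm) set \<Rightarrow> 'f sym trm set set" where
  "quotient_carrier R = {R `` {t} | t. wf ar t}"

definition representative :: "('f sym trm \<times> 'f sym trm) set \<Rightarrow> 'f sym trm set \<Rightarrow> 'f sym trm" where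
  "representative R X = (SOME t. wf ar t \<and> X = R `` {t})"

definition quotient_interp ::
  "('f sym trm \<times> 'f sym trm) set \<Rightarrow> 'f sym \<Rightarrow> 'f sym trm set list \<Rightarrow> 'f sym trm set" where
  "quotient_interp R g Xs = R `` {App g (map (representative R) Xs)}"

lemma class_eq_iff:
  assumes "E_congruence R" "wf ar a" "wf ar b"
  shows "R `` {a} = R `` {b} \<longleftrightarrow> (a, b) \<in> R"
proof
  assume "R `` {a} = R `` {b}"
  moreover have "(b, b) \<in> R" using congruence_refl[OF assms(1,3)] .
  ultimately show "(a, b) \<in> R" by blast
next
  assume "(a, b) \<in> R"
  then show "R `` {a} = R `` {b}"
    using congruence_sym[OF assms(1)] congruence_trans[OF assms(1)] by blast
qed

lemma representative_class:
  assumes R: "E_congruence R" and u: "wf ar u"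
  shows "wf ar (representative R (R `` {u})) \<and> (representative R (R `` {u}), u) \<in> R"
proof -
  have "wf ar (representative R (R `` {u})) \<and> R `` {u} = R `` {representative R (R `` {u})}"
    unfolding representative_def by (rule someI[where x = u]) (simp add: u)
  with class_eq_iff[OF R _ u] show ?thesis by (metis (no_types))
qed

lemma congruence_args:
  assumes R: "E_congruence R"
  shows "list_all2 (\<lambda>a b. (a, b) \<in> R) xs ys \<Longrightarrow> \<forall>t\<in>set l. wf ar t \<Longrightarrow>
    length l + length xs = arity ar g \<Longrightarrow> (App g (l @ xs), App g (l @ ys)) \<in> R"
proof (induction xs arbitrary: l ys)
  case Nil
  then show ?case using R by (auto intro!: congruence_refl)
next
  case (Cons x xs)
  then obtain y ys' where ys: "ys = y # ys'" and xy: "(x, y) \<in> R"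
    and rest: "list_all2 (\<lambda>a b. (a, b) \<in> R) xs ys'"
    by (cases ys) auto
  have wf_xs: "\<forall>t\<in>set xs. wf ar t"
    using rest by (induction xs ys' rule: list_all2_induct) (auto dest: congruence_wf[OF R])
  have "(fill (CApp g l Hole xs) x, fill (CApp g l Hole xs) y) \<in> R"
    using Cons.prems wf_xs xy by (intro congruence_fill[OF R]) auto
  moreover have "(App g ((l @ [y]) @ xs), App g ((l @ [y]) @ ys')) \<in> R"
    using Cons.prems congruence_wf[OF R xy] rest by (intro Cons.IH) auto
  ultimately show ?case using ys congruence_trans[OF R] by (metis append.assoc append_Cons append_Nil fill.simps)
qed

lemma quotient_eval:
  assumes R: "E_congruence R" and \<sigma>: "\<forall>x. wf ar (\<sigma> x) \<and> v x = R `` {\<sigma> x}"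
  shows "wf ar t \<Longrightarrow> eval (quotient_interp R) v t = R `` {subst \<sigma> t}"
proof (induction t)
  case (App g ts)
  let ?reps = "map (representative R) (map (eval (quotient_interp R) v) ts)"
  have "(representative R (eval (quotient_interp R) v ti), subst \<sigma> ti) \<in> R" if "ti \<in> set ts" for ti
  proof -
    have "wf ar (subst \<sigma> ti)" using App.prems that \<sigma> by (auto intro: wf_subst)
    then show ?thesis using App.IH[OF that] App.prems that representative_class[OF R] by auto
  qed
  then have "list_all2 (\<lambda>a b. (a, b) \<in> R) ?reps (map (subst \<sigma>) ts)"
    by (auto simp: list_all2_conv_all_nth)
  then have "(App g ([] @ ?reps), App g ([] @ map (subst \<sigma>) ts)) \<in> R"
    using App.prems by (intro congruence_args[OF R]) auto
  then have "R `` {App g ?reps} = R `` {subst \<sigma> (App g ts)}"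
    using class_eq_iff[OF R] congruence_wf[OF R] by (metis append_Nil subst.simps(2))
  then show ?case by (simp add: quotient_interp_def[of R g])
qed (use \<sigma> in simp)

lemma quotient_valuation:
  assumes R: "E_congruence R" and v: "\<forall>x. v x \<in> quotient_carrier R"
  shows "\<forall>x. wf ar (representative R (v x)) \<and> v x = R `` {representative R (v x)}"
proof
  fix x
  obtain u where u: "wf ar u" "v x = R `` {u}" using v by (auto simp: quotient_carrier_def)
  then show "wf ar (representative R (v x)) \<and> v x = R `` {representative R (v x)}"
    using representative_class[OF R u(1)] class_eq_iff[OF R] congruence_sym[OF R] by auto
qed

lemma quotient_struct:
  assumes R: "E_congruence R"
  shows "is_struct ar (quotient_carrier R) (quotient_interp R)"
  unfolding is_struct_def
proof (intro conjI allI impI)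
  show "quotient_carrier R \<noteq> {}"
    using wf.simps(1)[of ar 0] unfolding quotient_carrier_def by blast
  fix g Xs assume "length Xs = arity ar g" "set Xs \<subseteq> quotient_carrier R"
  then have "wf ar (App g (map (representative R) Xs))"
    using representative_class[OF R] by (auto simp: quotient_carrier_def)
  then show "quotient_interp R g Xs \<in> quotient_carrier R"
    by (auto simp: quotient_interp_def quotient_carrier_def)
qed

lemma quotient_satisfies_E:
  assumes R: "E_congruence R" and e: "e \<in> E"
  shows "sat_eq (quotient_carrier R) (quotient_interp R) e"
  unfolding sat_eq_def
proof (intro allI impI)
  fix v :: "nat \<Rightarrow> _" assume "\<forall>x. v x \<in> quotient_carrier R"
  then have \<sigma>: "\<forall>x. wf ar (representative R (v x)) \<and> v x = R `` {representative R (v x)}"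
    by (rule quotient_valuation[OF R])
  have wf: "wf ar (fst e)" "wf ar (snd e)" using wf_E e by (auto simp: wf_eq_def)
  have "subst (\<lambda>x. representative R (v x)) (fst e) \<approx> subst (\<lambda>x. representative R (v x)) (snd e)"
    using e \<sigma> eqderiv.ax[of "fst e" "snd e" E] by auto
  then show "eval (quotient_interp R) v (fst e) = eval (quotient_interp R) v (snd e)"
    using quotient_eval[OF R \<sigma>] wf class_eq_iff[OF R] congruence_derivable[OF R] derivable_wf
    by metis
qed

lemma quotient_refutes:
  assumes R: "E_congruence R" and "(r, s) \<notin> R" "wf ar r" "wf ar s"
  shows "\<not> sat_eq (quotient_carrier R) (quotient_interp R) (r, s)"
proof -
  have \<sigma>: "\<forall>x. wf ar (Var x) \<and> R `` {Var x} = R `` {Var x}" by simp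
  have "\<forall>x. R `` {Var x} \<in> quotient_carrier R" by (auto simp: quotient_carrier_def)
  moreover have "eval (quotient_interp R) (\<lambda>x. R `` {Var x}) r \<noteq> eval (quotient_interp R) (\<lambda>x. R `` {Var x}) s"
    using quotient_eval[OF R \<sigma>] assms class_eq_iff[OF R] by (simp add: subst_Var)
  ultimately show ?thesis unfolding sat_eq_def by auto
qed

lemma quotient_inverse_law:
  assumes max: "maximal_refuting r s M" and pu: "prop_units ar E" and pz: "prop_zeros ar E"
    and wf: "wf ar r" "wf ar s"
  shows "sat_IL (quotient_carrier M) (quotient_interp M)"
  unfolding sat_IL_def
proof (intro ballI impI)
  have M: "E_congruence M" using max by (simp add: maximal_refuting_def)
  fix X assume "X \<in> quotient_carrier M" and nonzero: "X \<noteq> quotient_interp M SZero []"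
  then obtain t where t: "wf ar t" "X = M `` {t}" by (auto simp: quotient_carrier_def)
  have "(t, tzero) \<notin> M"
    using nonzero t class_eq_iff[OF M t(1), of tzero] by (simp add: quotient_interp_def)
  then have one: "(one_t t, tone) \<in> M" by (rule maximal_refuting_inverse_law[OF max pu pz wf t(1)])
  have "quotient_interp M SMul [X, quotient_interp M SInv [X]]
      = eval (quotient_interp M) (\<lambda>_. X) (one_t (Var 0))"
    by (simp add: one_t_def)
  also have "\<dots> = M `` {subst (\<lambda>_. t) (one_t (Var 0))}"
    by (rule quotient_eval[OF M]) (use t in \<open>simp_all add: one_t_def\<close>)
  also have "\<dots> = M `` {tone}"
    using class_eq_iff[OF M, of "one_t t" tone] one t(1) by (simp add: one_t_def)
  also have "\<dots> = quotient_interp M SOne []" by (simp add: quotient_interp_def)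
  finally show "quotient_interp M SMul [X, quotient_interp M SInv [X]] = quotient_interp M SOne []" .
qed

lemma quotient_countermodel:
  assumes max: "maximal_refuting r s M" and pu: "prop_units ar E" and pz: "prop_zeros ar E"
    and wf: "wf ar r" "wf ar s"
  shows "model_E_IL ar E (quotient_carrier M) (quotient_interp M)"
    and "\<not> sat_eq (quotient_carrier M) (quotient_interp M) (r, s)"
proof -
  have M: "E_congruence M" and rs: "(r, s) \<notin> M" using max by (auto simp: maximal_refuting_def)
  show "model_E_IL ar E (quotient_carrier M) (quotient_interp M)"
    using quotient_struct[OF M] quotient_satisfies_E[OF M] quotient_inverse_law[OF max pu pz wf]
    by (simp add: model_E_IL_def)
  show "\<not> sat_eq (quotient_carrier M) (quotient_interp M) (r, s)"
    using quotient_refutes[OF M rs wf] .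
qed

end

theorem theorem2:
  fixes ar :: "'f \<Rightarrow> nat"
    and E :: "('f sym trm \<times> 'f sym trm) set"
    and r s :: "'f sym trm"
  assumes "\<forall>e\<in>E. wf_eq ar e"
    and "Md \<subseteq> E"
    and "prop_units ar E"
    and "prop_zeros ar E"
    and "wf ar r" and "wf ar s"
    and "\<exists>h :: 'f sym trm set \<Rightarrow> 'a. inj h"
  shows "eqderiv ar E r s \<longleftrightarrow>
         (\<forall>(A :: 'a set) I. model_E_IL ar E A I \<longrightarrow> sat_eq A I (r, s))"
proof
  assume "eqderiv ar E r s"
  then show "\<forall>(A :: 'a set) I. model_E_IL ar E A I \<longrightarrow> sat_eq A I (r, s)"
    using soundness by blast
next
  assume valid: "\<forall>(A :: 'a set) I. model_E_IL ar E A I \<longrightarrow> sat_eq A I (r, s)"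
  show "eqderiv ar E r s"
  proof (rule ccontr)
    assume "\<not> eqderiv ar E r s"
    interpret meadow_theory ar E using assms(1,2) by unfold_locales
    obtain M where max: "maximal_refuting r s M"
      using maximal_refuting_exists \<open>\<not> eqderiv ar E r s\<close> by blast
    obtain h :: "'f sym trm set \<Rightarrow> 'a" where h: "inj_on h (quotient_carrier M)"
      using assms(7) by (auto intro: inj_on_subset)
    note Q = quotient_countermodel[OF max assms(3-6)]
    have "model_E_IL ar E (h ` quotient_carrier M) (transport h (quotient_carrier M) (quotient_interp M))"
      using transport_model[OF Q(1) h assms(1)] .
    moreover have "\<not> sat_eq (h ` quotient_carrier M) (transport h (quotient_carrier M) (quotient_interp M)) (r, s)"
      using transport_refutes[OF _ h assms(5,6) Q(2)] Q(1) by (simp add: model_E_IL_def)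
    ultimately show False using valid by blast
  qed
qed

end
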